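(* Let $\ell\in\mathbb{Z}_{\ge 2}$, let $b_{n,m}=b_{n,m}(\ell)$ be as in the context, and let $R_{\ell-j}(x)$, $2\le j\le\ell$, be the rational functions defined by $R_{\ell-2}(x)=1$, $R_{\ell-3}(x)=x^{-1}$, $R_{\ell-j}(x)=x^{-1}R_{\ell-j+1}(x)-R_{\ell-j+2}(x)$ for $j>3$. Then for $2\le j\le \ell$ we have $R_{\ell-j}(x)=U_{j-2}\big(\tfrac{1}{2x}\big)$, and consequently $$\sum_{\substack{m\ge0,\ m\equiv \ell-j\bmod\ell\\ n\ge \ell-j}} b_{n,m}x^n \;=\; U_{j-2}\big(\tfrac{1}{2x}\big)\sum_{\substack{m\ge0,\ m\equiv \ell-2\bmod\ell\\ n\ge \ell-2}} b_{n,m}x^n .$$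
   Context: $U_j$ denotes the $j$th Chebyshev polynomial of the second kind: $U_0(x)=1$, $U_1(x)=2x$, $U_j(x)=2xU_{j-1}(x)-U_{j-2}(x)$ for $j\ge 2$. For $n,m\in\mathbb{Z}_{\ge 0}$, $a_{n,m}$ is the number of unit step paths $(x_0,\dots,x_n)$ on $\mathbb{Z}_{\ge0}$ (integers $x_i\ge0$, $|x_i-x_{i-1}|=1$) with $x_0=0$, $x_n=m$. For fixed $\ell\in\mathbb{Z}_{\ge2}$, $b_{n,m}=b_{n,m}(\ell)$ is defined by: $b_{n,m}=a_{n,m}$ if $m\equiv-1\pmod\ell$; $b_{n,m}=b_{n-1,m-1}+b_{n-1,m+1}$ if $m\equiv m_0\pmod\ell$ with $0\le m_0<\ell-2$; $b_{n,m}=b_{n-1,m-1}$ if $m\equiv-2\pmod\ell$; the recursion is used for $n\ge1$ with $b_{0,0}=1$, $b_{0,m}=0$ for $m>0$, and $b_{n,-1}=0$. Identities are of formal power series in $x$. *)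

theory Defs
  imports "HOL-Computational_Algebra.Formal_Laurent_Series"
begin

fun cheb_U :: "nat \<Rightarrow> 'a::comm_ring_1 \<Rightarrow> 'a" where
  "cheb_U 0 x = 1"
| "cheb_U (Suc 0) x = 2 * x"
| "cheb_U (Suc (Suc j)) x = 2 * x * cheb_U (Suc j) x - cheb_U j x"

definition path_count :: "nat \<Rightarrow> nat \<Rightarrow> nat" where
  "path_count n m = card {xs :: int list. length xs = Suc n \<and> xs ! 0 = 0 \<and> xs ! n = int m
      \<and> (\<forall>i\<le>n. xs ! i \<ge> 0) \<and> (\<forall>i<n. \<bar>xs ! Suc i - xs ! i\<bar> = 1)}"

text \<open>b l n m = b_{n,m}(l), with m an integer so that b_{n,-1} = 0 can be expressed
  (negative m gives 0).\<close>
fun bseq :: "nat \<Rightarrow> nat \<Rightarrow> int \<Rightarrow> nat" where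
  "bseq l 0 m =
     (if m < 0 then 0
      else if m mod int l = int l - 1 then path_count 0 (nat m)
      else if m = 0 then 1 else 0)"
| "bseq l (Suc n) m =
     (if m < 0 then 0
      else if m mod int l = int l - 1 then path_count (Suc n) (nat m)
      else if m mod int l = int l - 2 then bseq l n (m - 1)
      else bseq l n (m - 1) + bseq l n (m + 1))"

text \<open>Generating series  sum_{m >= 0, m = r mod l, n >= r} b_{n,m} x^n.  For each n the
  inner sum over m is taken over the (finite) support of m \<mapsto> b_{n,m}.\<close>
definition bgf :: "nat \<Rightarrow> nat \<Rightarrow> real fls" where
  "bgf l r = fps_to_fls (Abs_fps (\<lambda>n. if n \<ge> r then
      (\<Sum>m\<in>{m::nat. m mod l = r mod l \<and> bseq l n (int m) \<noteq> 0}. real (bseq l n (int m)))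
      else 0))"

text \<open>Rj j = R_{l-j}(x) (the recursion does not depend on l), as a Laurent series in x.\<close>
fun Rj :: "nat \<Rightarrow> real fls" where
  "Rj 0 = 0"
| "Rj (Suc 0) = 0"
| "Rj (Suc (Suc 0)) = 1"
| "Rj (Suc (Suc (Suc 0))) = fls_X_inv"
| "Rj (Suc (Suc (Suc (Suc k)))) = fls_X_inv * Rj (Suc (Suc (Suc k))) - Rj (Suc (Suc k))"

definition R :: "nat \<Rightarrow> nat \<Rightarrow> real fls" where
  "R l i = Rj (l - i)"

end

theory Submission
  imports Defs
begin

text \<open>Group the b_{n,m} by the residue r of m mod l into the generating series G_r = bgf l r.
  For 1 \<le> r+1 \<le> l-3 the rule b_{n+1,m} = b_{n,m-1} + b_{n,m+1} maps residue classes r and r+2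
  to class r+1, giving G_{r+1} = x (G_r + G_{r+2}); for the class l-2 only b_{n,m-1} occurs, giving
  G_{l-2} = x G_{l-3}. Hence G_{l-j} satisfies the recursion defining R_{l-j}, scaled by G_{l-2},
  and that recursion is the Chebyshev recursion of U_{j-2} at 1/(2x).\<close>

lemma path_count_eq_0:
  assumes "n < m" shows "path_count n m = 0"
proof -
  have bound: "xs ! n \<le> int n" if "xs ! 0 = 0" "\<forall>i<n. \<bar>xs ! Suc i - xs ! i\<bar> = 1" for xs :: "int list"
  proof -
    have "i \<le> n \<longrightarrow> xs ! i \<le> int i" for i
    proof (induction i)
      case (Suc i)
      show ?case
      proof
        assume "Suc i \<le> n"
        then have "xs ! i \<le> int i" "\<bar>xs ! Suc i - xs ! i\<bar> = 1"
          using Suc.IH that(2) by auto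
        then show "xs ! Suc i \<le> int (Suc i)"
          by arith
      qed
    qed (use that(1) in simp)
    then show ?thesis by simp
  qed
  show ?thesis
    unfolding path_count_def using assms bound by (subst Collect_empty_eq[THEN iffD2]) force+
qed

lemma bseq_eq_0: "int n < m \<Longrightarrow> bseq l n m = 0"
  by (induction n arbitrary: m) (auto intro: path_count_eq_0)

lemma bseq_Suc_nat:
  assumes "2 \<le> l"
  shows "bseq l (Suc n) (int m) =
    (if m mod l = l - 1 then path_count (Suc n) m
     else if m mod l = l - 2 then bseq l n (int m - 1)
     else bseq l n (int m - 1) + bseq l n (int m + 1))"
proof -
  have "(int m mod int l = int l - 1) = (m mod l = l - 1)"
       "(int m mod int l = int l - 2) = (m mod l = l - 2)"
    using assms by (metis of_nat_1 of_nat_diff of_nat_eq_iff of_nat_mod one_le_numeral order.trans,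
                    metis of_nat_diff of_nat_eq_iff of_nat_mod of_nat_numeral)
  then show ?thesis by simp
qed

definition class_term :: "nat \<Rightarrow> nat \<Rightarrow> nat \<Rightarrow> nat \<Rightarrow> real" where
  "class_term l r n m = (if m mod l = r then real (bseq l n (int m)) else 0)"

definition class_sum :: "nat \<Rightarrow> nat \<Rightarrow> nat \<Rightarrow> real" where
  "class_sum l r n = (\<Sum>m\<le>n. class_term l r n m)"

lemma class_sum_atMost: "n \<le> K \<Longrightarrow> (\<Sum>m\<le>K. class_term l r n m) = class_sum l r n"
  unfolding class_sum_def
  by (rule sum.mono_neutral_right) (auto simp: class_term_def bseq_eq_0)

lemma bgf_eq_class_sum:
  assumes "r < l"
  shows "bgf l r = fps_to_fls (Abs_fps (class_sum l r))"
proof -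
  have "(\<Sum>m\<in>{m. m mod l = r mod l \<and> bseq l n (int m) \<noteq> 0}. real (bseq l n (int m)))
      = class_sum l r n" for n
    unfolding class_sum_def
  proof (rule sum.mono_neutral_cong_left)
    show "{m. m mod l = r mod l \<and> bseq l n (int m) \<noteq> 0} \<subseteq> {..n}"
      using bseq_eq_0[of n _ l] by (auto simp: not_less[symmetric])
  qed (use assms in \<open>auto simp: class_term_def\<close>)
  moreover have "class_sum l r n = 0" if "n < r" for n
    using that assms by (simp add: class_sum_def class_term_def)
  ultimately show ?thesis
    unfolding bgf_def by (metis not_le)
qed

lemma class_term_0: "0 < r \<Longrightarrow> r < l \<Longrightarrow> class_term l r n 0 = 0"
  by (simp add: class_term_def)

lemma class_term_Suc_interior:
  assumes "r + 3 < l"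
  shows "class_term l (Suc r) (Suc n) (Suc m) = class_term l r n m + class_term l (r + 2) n (m + 2)"
proof (cases "m mod l = r")
  case True
  then have "Suc m mod l = Suc r" "Suc (Suc m) mod l = r + 2"
    using assms by (simp_all add: mod_Suc)
  moreover have "Suc r \<noteq> l - 1" "Suc r \<noteq> l - 2"
    using assms by auto
  ultimately show ?thesis
    using assms True bseq_Suc_nat[of l n "Suc m"] by (simp add: class_term_def del: bseq.simps)
next
  case False
  then have "Suc m mod l \<noteq> Suc r" "Suc (Suc m) mod l \<noteq> r + 2"
    using assms by (auto simp: mod_Suc)
  with False show ?thesis
    by (simp add: class_term_def)
qed

lemma class_term_Suc_top:
  assumes "3 \<le> l"
  shows "class_term l (l - 2) (Suc n) (Suc m) = class_term l (l - 3) n m"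
proof (cases "m mod l = l - 3")
  case True
  then have "Suc m mod l = l - 2" "l - 2 \<noteq> l - 1"
    using assms by (auto simp: mod_Suc)
  then show ?thesis
    using assms True bseq_Suc_nat[of l n "Suc m"] by (simp add: class_term_def del: bseq.simps)
next
  case False
  then have "Suc m mod l \<noteq> l - 2"
    using assms by (auto simp: mod_Suc)
  with False show ?thesis
    by (simp add: class_term_def)
qed

lemma class_sum_Suc_interior:
  assumes "r + 3 < l"
  shows "class_sum l (Suc r) (Suc n) = class_sum l r n + class_sum l (r + 2) n"
proof -
  have "class_sum l (Suc r) (Suc n) = (\<Sum>m\<le>n. class_term l (Suc r) (Suc n) (Suc m))"
    using assms by (simp add: class_sum_def sum.atMost_Suc_shift class_term_0 del: sum.atMost_Suc)
  also have "\<dots> = class_sum l r n + (\<Sum>m\<le>n. class_term l (r + 2) n (Suc (Suc m)))"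
    using assms by (simp add: class_term_Suc_interior sum.distrib class_sum_def)
  also have "(\<Sum>m\<le>n. class_term l (r + 2) n (Suc (Suc m))) = (\<Sum>m\<le>n + 2. class_term l (r + 2) n m)"
    using assms by (simp add: sum.atMost_Suc_shift class_term_0 del: sum.atMost_Suc)
      (simp add: class_term_def)
  also have "\<dots> = class_sum l (r + 2) n"
    by (rule class_sum_atMost) simp
  finally show ?thesis .
qed

lemma class_sum_Suc_top:
  assumes "3 \<le> l"
  shows "class_sum l (l - 2) (Suc n) = class_sum l (l - 3) n"
  using assms
  by (simp add: class_sum_def sum.atMost_Suc_shift class_term_0 class_term_Suc_top del: sum.atMost_Suc)

lemma class_sum_0: "0 < r \<Longrightarrow> r < l \<Longrightarrow> class_sum l r 0 = 0"
  by (simp add: class_sum_def class_term_0)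

lemma bgf_Suc_interior:
  assumes "r + 3 < l"
  shows "bgf l (Suc r) = fls_X * (bgf l r + bgf l (r + 2))"
proof -
  have "class_sum l (Suc r) n = (fps_X * (Abs_fps (class_sum l r) + Abs_fps (class_sum l (r + 2)))) $ n" for n
    using assms by (cases n) (simp_all add: class_sum_0 class_sum_Suc_interior)
  then have "Abs_fps (class_sum l (Suc r)) = fps_X * (Abs_fps (class_sum l r) + Abs_fps (class_sum l (r + 2)))"
    by (simp add: fps_eq_iff)
  then show ?thesis
    using assms by (simp add: bgf_eq_class_sum fls_times_fps_to_fls)
qed

lemma bgf_top:
  assumes "3 \<le> l"
  shows "bgf l (l - 2) = fls_X * bgf l (l - 3)"
proof -
  have "class_sum l (l - 2) n = (fps_X * Abs_fps (class_sum l (l - 3))) $ n" for n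
    using assms by (cases n) (simp_all add: class_sum_0 class_sum_Suc_top)
  then have "Abs_fps (class_sum l (l - 2)) = fps_X * Abs_fps (class_sum l (l - 3))"
    by (simp add: fps_eq_iff)
  then show ?thesis
    using assms by (simp add: bgf_eq_class_sum fls_times_fps_to_fls)
qed

lemma fls_X_inv_times_X_times:
  "fls_X_inv * (fls_X * f) = (f :: 'a::{comm_monoid_add,mult_zero,monoid_mult} fls)"
  by (simp add: fls_X_inv_times_conv_shift fls_X_times_conv_shift)

lemma bgf_eq_Rj_times:
  "Suc (Suc k) \<le> l \<Longrightarrow> bgf l (l - Suc (Suc k)) = Rj (Suc (Suc k)) * bgf l (l - 2)"
proof (induction k rule: induct_nat_012)
  case 0
  then show ?case
    by (simp add: numeral_2_eq_2)
next
  case 1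
  then show ?case
    using bgf_top[of l] by (simp add: numeral_3_eq_3 fls_X_inv_times_X_times)
next
  case (ge2 k)
  define r where "r = l - Suc (Suc (Suc (Suc k)))"
  have r: "r + 3 < l" "Suc r = l - Suc (Suc (Suc k))" "r + 2 = l - Suc (Suc k)"
    using ge2.prems by (simp_all add: r_def)
  have "bgf l r = fls_X_inv * bgf l (Suc r) - bgf l (r + 2)"
    using bgf_Suc_interior[OF r(1)] by (simp add: fls_X_inv_times_X_times)
  also have "\<dots> = (fls_X_inv * Rj (Suc (Suc (Suc k))) - Rj (Suc (Suc k))) * bgf l (l - 2)"
    using ge2.IH[folded r(2,3)] ge2.prems by (simp add: algebra_simps)
  finally show ?case
    by (simp add: r_def)
qed

lemma two_times_inverse_two_fls_X: "2 * inverse (2 * fls_X) = (fls_X_inv :: 'a::field_char_0 fls)"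
  by (simp add: fls_inverse_X)

lemma Rj_eq_cheb_U: "Rj (Suc (Suc k)) = cheb_U k (inverse (2 * fls_X))"
proof (induction k rule: induct_nat_012)
  case 1
  show ?case
    using two_times_inverse_two_fls_X[where 'a=real] by simp
next
  case (ge2 k)
  then show ?case
    using two_times_inverse_two_fls_X[where 'a=real] by (simp add: mult.assoc[symmetric])
qed simp

theorem lemma2p9:
  fixes l j :: nat
  assumes "l \<ge> 2" and "2 \<le> j" and "j \<le> l"
  shows "R l (l - j) = cheb_U (j - 2) (inverse (2 * fls_X))
    \<and> bgf l (l - j) = cheb_U (j - 2) (inverse (2 * fls_X)) * bgf l (l - 2)"
proof -
  obtain k where j: "j = Suc (Suc k)"
    using assms(2) by (metis add_2_eq_Suc le_Suc_ex)
  have "R l (l - j) = Rj j"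
    using assms by (simp add: R_def)
  then show ?thesis
    using bgf_eq_Rj_times[of k l] Rj_eq_cheb_U[of k] assms(3) by (simp add: j)
qed

end
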